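(* Let $k$ be a positive integer, $a\ge k+2$ an integer and $G=K_a\,\square\,K_a$. Then $\gamma_{P,k}(G-v)=a-k-1$ for every vertex $v$ of $G$.
   Context: $K_a$ is the complete graph on $a$ vertices, $\square$ denotes the Cartesian product of graphs, and $G-v$ is obtained by deleting $v$ and its incident edges. $N_G[v]$ is the closed neighbourhood of $v$, and $N_G[S]$ the union of closed neighbourhoods of vertices of $S$. For $S\subseteq V(G)$, define $\mathcal{P}^{0}_{G,k}(S)=N_G[S]$ and $\mathcal{P}^{i+1}_{G,k}(S)=\bigcup\{N_G[v] : v\in \mathcal{P}^{i}_{G,k}(S),\ |N_G[v]\setminus \mathcal{P}^{i}_{G,k}(S)|\le k\}$; these increase and stabilize to $\mathcal{P}^{\infty}_{G,k}(S)$. $S$ is a $k$-power dominating set if $\mathcal{P}^{\infty}_{G,k}(S)=V(G)$; $\gamma_{P,k}(G)$ is the minimum size of such a set. *)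

theory Defs
  imports Main
begin

text \<open>A finite simple graph is given by a vertex set V and a symmetric irreflexive
adjacency relation E (only its restriction to V matters).\<close>

definition closed_nbhd :: "'a set \<Rightarrow> ('a \<Rightarrow> 'a \<Rightarrow> bool) \<Rightarrow> 'a \<Rightarrow> 'a set" where
  "closed_nbhd V E v = insert v {u \<in> V. E v u}"

definition closed_nbhd_set :: "'a set \<Rightarrow> ('a \<Rightarrow> 'a \<Rightarrow> bool) \<Rightarrow> 'a set \<Rightarrow> 'a set" where
  "closed_nbhd_set V E S = (\<Union>v\<in>S. closed_nbhd V E v)"

definition pd_step :: "'a set \<Rightarrow> ('a \<Rightarrow> 'a \<Rightarrow> bool) \<Rightarrow> nat \<Rightarrow> 'a set \<Rightarrow> 'a set" where
  "pd_step V E k P = P \<union> \<Union>{closed_nbhd V E v | v. v \<in> P \<and> card (closed_nbhd V E v - P) \<le> k}"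

definition pd_iter :: "'a set \<Rightarrow> ('a \<Rightarrow> 'a \<Rightarrow> bool) \<Rightarrow> nat \<Rightarrow> 'a set \<Rightarrow> nat \<Rightarrow> 'a set" where
  "pd_iter V E k S i = (pd_step V E k ^^ i) (closed_nbhd_set V E S)"

definition pd_closure :: "'a set \<Rightarrow> ('a \<Rightarrow> 'a \<Rightarrow> bool) \<Rightarrow> nat \<Rightarrow> 'a set \<Rightarrow> 'a set" where
  "pd_closure V E k S = (\<Union>i. pd_iter V E k S i)"

definition k_power_dominating :: "'a set \<Rightarrow> ('a \<Rightarrow> 'a \<Rightarrow> bool) \<Rightarrow> nat \<Rightarrow> 'a set \<Rightarrow> bool" where
  "k_power_dominating V E k S \<longleftrightarrow> S \<subseteq> V \<and> pd_closure V E k S = V"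

definition k_power_domination_number :: "'a set \<Rightarrow> ('a \<Rightarrow> 'a \<Rightarrow> bool) \<Rightarrow> nat \<Rightarrow> nat" where
  "k_power_domination_number V E k = Min {card S | S. k_power_dominating V E k S}"

definition rook_vertices :: "nat \<Rightarrow> (nat \<times> nat) set" where
  "rook_vertices a = {0..<a} \<times> {0..<a}"

definition rook_adj :: "(nat \<times> nat) \<Rightarrow> (nat \<times> nat) \<Rightarrow> bool" where
  "rook_adj x y \<longleftrightarrow> (fst x = fst y \<and> snd x \<noteq> snd y) \<or> (snd x = snd y \<and> fst x \<noteq> fst y)"

end

theory Submission
  imports Defs
begin

text \<open>If S has at most a - k - 2 vertices, more than k rows and more than k columns
  avoid both S and the deleted vertex, so every observed vertex off the lines through S
  has more than k unobserved neighbours and propagation never starts. Conversely,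
  a - k - 1 diagonal vertices avoiding the row and column of the deleted vertex leave
  exactly k + 1 free rows and columns, and propagation then observes everything in
  two rounds.\<close>

lemma pd_iter_Suc: "pd_iter V E k S (Suc i) = pd_step V E k (pd_iter V E k S i)"
  by (simp add: pd_iter_def)

lemma pd_step_subset: "P \<subseteq> pd_step V E k P"
  unfolding pd_step_def by blast

lemma pd_iter_mono: "i \<le> j \<Longrightarrow> pd_iter V E k S i \<subseteq> pd_iter V E k S j"
  by (rule lift_Suc_mono_le[of "pd_iter V E k S"]) (simp_all add: pd_iter_Suc pd_step_subset)

lemma closed_nbhd_set_subset_pd_closure: "closed_nbhd_set V E S \<subseteq> pd_closure V E k S"
  unfolding pd_closure_def using UN_upper[of 0 UNIV "pd_iter V E k S"] by (simp add: pd_iter_def)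

lemma pd_closure_subset:
  assumes "S \<subseteq> V" shows "pd_closure V E k S \<subseteq> V"
proof -
  have nbhd: "closed_nbhd V E x \<subseteq> V" if "x \<in> V" for x
    using that unfolding closed_nbhd_def by auto
  have "pd_iter V E k S i \<subseteq> V" for i
  proof (induction i)
    case 0
    show ?case using assms nbhd by (auto simp: pd_iter_def closed_nbhd_set_def)
  next
    case (Suc i)
    then show ?case using nbhd by (auto simp: pd_iter_Suc pd_step_def)
  qed
  then show ?thesis unfolding pd_closure_def by blast
qed

lemma pd_closure_eq_if_stable:
  assumes "pd_step V E k (closed_nbhd_set V E S) = closed_nbhd_set V E S"
  shows "pd_closure V E k S = closed_nbhd_set V E S"
proof -
  have "pd_iter V E k S i = closed_nbhd_set V E S" for i
    by (induction i) (simp_all add: pd_iter_def assms)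
  then show ?thesis unfolding pd_closure_def by simp
qed

text \<open>The finitely many observed neighbours of x are all observed at a common stage, so
  the closure itself obeys the propagation rule.\<close>
lemma pd_closure_propagate:
  assumes fin: "finite (closed_nbhd V E x)" and x: "x \<in> pd_closure V E k S"
    and T: "T \<subseteq> pd_closure V E k S" and few: "card (closed_nbhd V E x - T) \<le> k"
  shows "closed_nbhd V E x \<subseteq> pd_closure V E k S"
proof -
  let ?P = "pd_iter V E k S"
  let ?F = "insert x (closed_nbhd V E x \<inter> pd_closure V E k S)"
  have "?P i \<subseteq> ?P j \<or> ?P j \<subseteq> ?P i" for i j
    using nle_le pd_iter_mono by metis
  then have chain: "subset.chain UNIV (range ?P)"
    by (auto simp: subset.chain_def)
  have cover: "?F \<subseteq> \<Union>(range ?P)"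
    using x unfolding pd_closure_def by blast
  obtain B where "B \<in> range ?P" and "?F \<subseteq> B"
    by (rule finite_subset_Union_chain[OF _ cover _ chain]) (use fin in auto)
  then obtain i where i: "?F \<subseteq> ?P i"
    by blast
  have "closed_nbhd V E x - ?P i \<subseteq> closed_nbhd V E x - T"
    using i T by blast
  then have "card (closed_nbhd V E x - ?P i) \<le> k"
    using few fin by (meson card_mono finite_Diff le_trans)
  moreover have "x \<in> ?P i" using i by blast
  ultimately have "closed_nbhd V E x \<subseteq> pd_step V E k (?P i)"
    unfolding pd_step_def by blast
  then have "closed_nbhd V E x \<subseteq> ?P (Suc i)"
    by (simp add: pd_iter_Suc)
  then show ?thesis unfolding pd_closure_def by blast
qed

lemma k_power_domination_number_eqI:
  assumes "finite V"
    and "\<And>S. k_power_dominating V E k S \<Longrightarrow> m \<le> card S"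
    and "k_power_dominating V E k S\<^sub>0" and "card S\<^sub>0 = m"
  shows "k_power_domination_number V E k = m"
proof -
  let ?A = "{card S | S. k_power_dominating V E k S}"
  have "?A \<subseteq> {..card V}"
    using \<open>finite V\<close> by (auto simp: k_power_dominating_def intro!: card_mono)
  then have "finite ?A" by (rule finite_subset) simp
  then show ?thesis
    unfolding k_power_domination_number_def using assms by (intro Min_eqI) auto
qed

abbreviation punctured_rook :: "nat \<Rightarrow> nat \<times> nat \<Rightarrow> (nat \<times> nat) set" where
  "punctured_rook a v \<equiv> rook_vertices a - {v}"

lemma mem_rook_vertices: "x \<in> rook_vertices a \<longleftrightarrow> fst x < a \<and> snd x < a"
  unfolding rook_vertices_def by (cases x) auto

lemma finite_punctured_rook: "finite (punctured_rook a v)"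
  unfolding rook_vertices_def by simp

lemma finite_closed_nbhd_punctured_rook:
  "finite (closed_nbhd (punctured_rook a v) rook_adj x)"
  unfolding closed_nbhd_def using finite_punctured_rook by simp

lemma closed_nbhd_punctured_rook:
  assumes "x \<in> punctured_rook a v"
  shows "closed_nbhd (punctured_rook a v) rook_adj x =
    {u \<in> punctured_rook a v. fst u = fst x \<or> snd u = snd x}"
  using assms unfolding closed_nbhd_def rook_adj_def by (auto simp: prod_eq_iff)

lemma closed_nbhd_set_punctured_rook:
  assumes "S \<subseteq> punctured_rook a v"
  shows "closed_nbhd_set (punctured_rook a v) rook_adj S =
    {u \<in> punctured_rook a v. fst u \<in> fst ` S \<or> snd u \<in> snd ` S}"
proof -
  have "closed_nbhd_set (punctured_rook a v) rook_adj S =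
    (\<Union>x\<in>S. {u \<in> punctured_rook a v. fst u = fst x \<or> snd u = snd x})"
    unfolding closed_nbhd_set_def using assms
    by (intro SUP_cong refl closed_nbhd_punctured_rook) auto
  also have "\<dots> = {u \<in> punctured_rook a v. fst u \<in> fst ` S \<or> snd u \<in> snd ` S}"
    by force
  finally show ?thesis .
qed

lemma rook_lines_pd_step_stable:
  fixes a k :: nat and v :: "nat \<times> nat" and R C :: "nat set"
  defines "P \<equiv> {u \<in> punctured_rook a v. fst u \<in> R \<or> snd u \<in> C}"
  assumes rows: "k < card ({0..<a} - insert (fst v) R)"
    and cols: "k < card ({0..<a} - insert (snd v) C)"
  shows "pd_step (punctured_rook a v) rook_adj k P = P"
proof -
  let ?N = "closed_nbhd (punctured_rook a v) rook_adj"
  have "?N x \<subseteq> P" if x: "x \<in> P" and few: "card (?N x - P) \<le> k" for x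
  proof -
    have xV: "x \<in> punctured_rook a v" using x unfolding P_def by simp
    have fin: "finite (?N x - P)"
      using finite_closed_nbhd_punctured_rook by simp
    have "fst x \<in> R"
    proof (rule ccontr)
      assume "fst x \<notin> R"
      let ?J = "{0..<a} - insert (snd v) C"
      have "Pair (fst x) ` ?J \<subseteq> ?N x - P"
        using xV \<open>fst x \<notin> R\<close>
        by (auto simp: closed_nbhd_punctured_rook P_def mem_rook_vertices)
      then have "card (Pair (fst x) ` ?J) \<le> card (?N x - P)"
        by (rule card_mono[OF fin])
      then show False using cols few by (simp add: card_image inj_on_def)
    qed
    moreover have "snd x \<in> C"
    proof (rule ccontr)
      assume "snd x \<notin> C"
      let ?I = "{0..<a} - insert (fst v) R"
      have "(\<lambda>i. (i, snd x)) ` ?I \<subseteq> ?N x - P"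
        using xV \<open>snd x \<notin> C\<close>
        by (auto simp: closed_nbhd_punctured_rook P_def mem_rook_vertices)
      then have "card ((\<lambda>i. (i, snd x)) ` ?I) \<le> card (?N x - P)"
        by (rule card_mono[OF fin])
      then show False using rows few by (simp add: card_image inj_on_def)
    qed
    ultimately show ?thesis
      using xV by (auto simp: closed_nbhd_punctured_rook P_def)
  qed
  then show ?thesis
    using pd_step_subset[of P] unfolding pd_step_def by blast
qed

lemma punctured_rook_pd_lower_bound:
  assumes "k_power_dominating (punctured_rook a v) rook_adj k S"
  shows "a - k - 1 \<le> card S"
proof (rule ccontr)
  let ?V = "punctured_rook a v"
  assume "\<not> ?thesis"
  then have small: "card S + k + 2 \<le> a" by simp
  have SV: "S \<subseteq> ?V" and dom: "pd_closure ?V rook_adj k S = ?V"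
    using assms unfolding k_power_dominating_def by auto
  have "finite S" using finite_punctured_rook SV by (rule finite_subset[rotated])
  have missing: "k < card ({0..<a} - insert y (f ` S))" for y and f :: "nat \<times> nat \<Rightarrow> nat"
  proof -
    have "card (insert y (f ` S)) \<le> card S + 1"
      using card_image_le[OF \<open>finite S\<close>, of f] \<open>finite S\<close> by (simp add: card_insert_if)
    then show ?thesis
      using diff_card_le_card_Diff[of "insert y (f ` S)" "{0..<a}"] small \<open>finite S\<close> by simp
  qed
  let ?P = "{u \<in> ?V. fst u \<in> fst ` S \<or> snd u \<in> snd ` S}"
  have "pd_step ?V rook_adj k ?P = ?P"
    by (rule rook_lines_pd_step_stable[OF missing missing])
  then have "pd_closure ?V rook_adj k S = ?P"
    using pd_closure_eq_if_stable[of ?V rook_adj k S] closed_nbhd_set_punctured_rook[OF SV]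
    by simp
  then have V_eq: "?V = ?P" using dom by simp
  have "{0..<a} - insert (fst v) (fst ` S) \<noteq> {}"
    using missing[of "fst v" fst] by (intro notI) simp
  then obtain i where i: "i \<in> {0..<a} - insert (fst v) (fst ` S)" by blast
  have "{0..<a} - insert (snd v) (snd ` S) \<noteq> {}"
    using missing[of "snd v" snd] by (intro notI) simp
  then obtain j where j: "j \<in> {0..<a} - insert (snd v) (snd ` S)" by blast
  have "(i, j) \<in> ?V" using i j by (auto simp: mem_rook_vertices)
  moreover have "(i, j) \<notin> ?P" using i j by auto
  ultimately show False using V_eq by blast
qed

text \<open>Observing the rows and columns of D, the vertex (d, c) of the deleted vertex's column
  has exactly k unobserved neighbours, and so does (r, d) on its row; once column c is
  observed, each (i, c) sees exactly k unobserved vertices on row i.\<close>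
lemma punctured_rook_diagonal_k_power_dominating:
  assumes v: "v \<in> rook_vertices a"
    and D: "D \<subseteq> {0..<a} - {fst v, snd v}" "D \<noteq> {}" "card D + k + 1 = a"
  shows "k_power_dominating (punctured_rook a v) rook_adj k ((\<lambda>t. (t, t)) ` D)"
proof -
  obtain r c where vrc: "v = (r, c)" by (cases v)
  let ?V = "punctured_rook a v"
  let ?N = "closed_nbhd ?V rook_adj"
  let ?S = "(\<lambda>t. (t, t)) ` D"
  let ?Q = "pd_closure ?V rook_adj k ?S"
  let ?lines = "{u \<in> ?V. fst u \<in> D \<or> snd u \<in> D}"
  have SV: "?S \<subseteq> ?V" using D(1) by (auto simp: mem_rook_vertices)
  define U where "U = {0..<a} - D"
  have "finite D" using D(1) by (rule finite_subset) simp
  have "card U = k + 1"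
    unfolding U_def using D \<open>finite D\<close> by (subst card_Diff_subset) auto
  moreover have "r \<in> U" "c \<in> U" using v D(1) unfolding U_def vrc by (auto simp: mem_rook_vertices)
  ultimately have card_U_r: "card (U - {r}) = k" and card_U_c: "card (U - {c}) = k" by simp_all
  have "finite U" unfolding U_def by simp
  have lines: "?lines \<subseteq> ?Q"
    using closed_nbhd_set_subset_pd_closure[of ?V rook_adj ?S k]
    unfolding closed_nbhd_set_punctured_rook[OF SV] by (simp add: image_image)
  have propagate: "?N x \<subseteq> ?Q"
    if "x \<in> ?Q" "T \<subseteq> ?Q" "?N x - T \<subseteq> f ` A" "finite A" "card A = k"
    for x T and f :: "nat \<Rightarrow> nat \<times> nat" and A
  proof (rule pd_closure_propagate[OF finite_closed_nbhd_punctured_rook that(1,2)])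
    have "card (?N x - T) \<le> card (f ` A)" using that(3,4) by (intro card_mono) auto
    also have "\<dots> \<le> card A" using that(4) by (rule card_image_le)
    finally show "card (?N x - T) \<le> k" using that(5) by simp
  qed
  obtain d where d: "d \<in> D" using D(2) by blast
  then have "d < a" "d \<noteq> r" "d \<noteq> c" using D(1) vrc by auto
  have column_c: "{u \<in> ?V. snd u = c} \<subseteq> ?Q"
  proof -
    have "(d, c) \<in> ?lines" using d \<open>d < a\<close> \<open>d \<noteq> r\<close> v vrc by (auto simp: mem_rook_vertices)
    then have "?N (d, c) \<subseteq> ?Q"
      using \<open>finite U\<close> card_U_r lines d
      by (intro propagate[where T = ?lines and f = "\<lambda>i. (i, c)" and A = "U - {r}"])
        (auto simp: closed_nbhd_punctured_rook mem_rook_vertices U_def vrc)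
    then show ?thesis using \<open>(d, c) \<in> ?lines\<close> by (auto simp: closed_nbhd_punctured_rook)
  qed
  have row_r: "{u \<in> ?V. fst u = r} \<subseteq> ?Q"
  proof -
    have "(r, d) \<in> ?lines" using d \<open>d < a\<close> \<open>d \<noteq> c\<close> v vrc by (auto simp: mem_rook_vertices)
    then have "?N (r, d) \<subseteq> ?Q"
      using \<open>finite U\<close> card_U_c lines d
      by (intro propagate[where T = ?lines and f = "Pair r" and A = "U - {c}"])
        (auto simp: closed_nbhd_punctured_rook mem_rook_vertices U_def vrc)
    then show ?thesis using \<open>(r, d) \<in> ?lines\<close> by (auto simp: closed_nbhd_punctured_rook)
  qed
  have row: "{u \<in> ?V. fst u = i} \<subseteq> ?Q" if "i < a" "i \<noteq> r" for i
  proof -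
    have "(i, c) \<in> ?V" using that v vrc by (auto simp: mem_rook_vertices)
    then have "?N (i, c) \<subseteq> ?Q"
      using \<open>finite U\<close> card_U_c lines column_c
      by (intro propagate[where T = "?lines \<union> {u \<in> ?V. snd u = c}" and f = "Pair i"
            and A = "U - {c}"])
        (auto simp: closed_nbhd_punctured_rook mem_rook_vertices U_def vrc)
    then show ?thesis using \<open>(i, c) \<in> ?V\<close> by (auto simp: closed_nbhd_punctured_rook)
  qed
  have "?V \<subseteq> ?Q"
  proof
    fix u assume u: "u \<in> ?V"
    show "u \<in> ?Q"
    proof (cases "fst u = r")
      case True
      then show ?thesis using u row_r by blast
    next
      case False
      then show ?thesis using u row[of "fst u"] by (auto simp: mem_rook_vertices)
    qed
  qed
  then show ?thesis
    using SV pd_closure_subset[OF SV] unfolding k_power_dominating_def by blast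
qed

theorem mainTheorem6:
  fixes k a :: nat and v :: "nat \<times> nat"
  assumes "k \<ge> 1" and "a \<ge> k + 2" and "v \<in> rook_vertices a"
  shows "k_power_domination_number (rook_vertices a - {v}) rook_adj k = a - k - 1"
proof -
  have "a - k - 1 \<le> a - 2" using \<open>k \<ge> 1\<close> by simp
  also have "a - 2 \<le> card ({0..<a} - {fst v, snd v})"
    using diff_card_le_card_Diff[of "{fst v, snd v}" "{0..<a}"]
    by (cases "fst v = snd v") auto
  finally obtain D where D: "D \<subseteq> {0..<a} - {fst v, snd v}" "card D = a - k - 1"
    by (rule obtain_subset_with_card_n)
  have "D \<noteq> {}" using D(2) \<open>a \<ge> k + 2\<close> by auto
  have "card D + k + 1 = a" using D(2) \<open>a \<ge> k + 2\<close> by simp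
  then have dominating: "k_power_dominating (rook_vertices a - {v}) rook_adj k ((\<lambda>t. (t, t)) ` D)"
    using D(1) \<open>D \<noteq> {}\<close> \<open>v \<in> rook_vertices a\<close>
    by (intro punctured_rook_diagonal_k_power_dominating)
  have card: "card ((\<lambda>t. (t, t)) ` D) = a - k - 1"
    using D(2) by (subst card_image) (auto simp: inj_on_def)
  show ?thesis
    using finite_punctured_rook punctured_rook_pd_lower_bound dominating card
    by (rule k_power_domination_number_eqI)
qed

end
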